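(* For $(p,q,r,s)$ define $$\mathcal{J}_1=\frac{(p^2+s^2)qr+\beta(p+s)(q^2+r^2+ps)+\beta^2qr}{pqrs},$$ $$\mathcal{J}_2=\frac{pr^2(q+r+s)+sq^2(p+q+r)+ps(pr+ps+qs)+\beta qr(q+r)}{pqrs},$$ $$\mathcal{J}_3=\frac{(ps+q^2+r^2)(pr^2+ps^2+q^2s+\beta qr)(pr^2+p^2s+q^2s+\beta qr)}{p^2q^2r^2s^2}.$$ Then for every $\beta\in\mathbb{Z}\setminus\{0\}$ and every $(\lambda_1:\lambda_2:\lambda_3)\in\mathbb{P}^2$, the Diophantine equation $$\lambda_1\mathcal{J}_1+\lambda_2\mathcal{J}_2+\lambda_3\mathcal{J}_3=\lambda_1(\beta^2+6\beta+2)+\lambda_2(2\beta+9)+3\lambda_3(\beta+3)^2$$ has infinitely many integer solutions $(p,q,r,s)$. *)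

theory Defs
  imports Complex_Main
begin

definition J1 :: "int \<Rightarrow> int \<Rightarrow> int \<Rightarrow> int \<Rightarrow> int \<Rightarrow> rat" where
  "J1 \<beta> p q r s =
     of_int ((p^2 + s^2)*q*r + \<beta>*(p+s)*(q^2 + r^2 + p*s) + \<beta>^2*q*r) / of_int (p*q*r*s)"

definition J2 :: "int \<Rightarrow> int \<Rightarrow> int \<Rightarrow> int \<Rightarrow> int \<Rightarrow> rat" where
  "J2 \<beta> p q r s =
     of_int (p*r^2*(q+r+s) + s*q^2*(p+q+r) + p*s*(p*r + p*s + q*s) + \<beta>*q*r*(q+r))
     / of_int (p*q*r*s)"

definition J3 :: "int \<Rightarrow> int \<Rightarrow> int \<Rightarrow> int \<Rightarrow> int \<Rightarrow> rat" where
  "J3 \<beta> p q r s =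
     of_int ((p*s + q^2 + r^2) * (p*r^2 + p*s^2 + q^2*s + \<beta>*q*r)
             * (p*r^2 + p^2*s + q^2*s + \<beta>*q*r))
     / of_int (p^2*q^2*r^2*s^2)"

end

theory Submission
  imports Defs "HOL-Library.Infinite_Set"
begin

text \<open>
  Put \<open>D = \<beta>(\<beta>+6)\<close>. All three equations \<open>\<J>\<^sub>i = c\<^sub>i\<close> hold simultaneously for the quadruples
  \<open>p = 1 + \<beta>(\<beta>+3)u, q = 1 + \<beta>(v+3u), r = 1 + \<beta>(2v+3u), s = 1 + \<beta>(\<beta>+3)(u+v)\<close>
  whenever \<open>(u, v)\<close> lies on the conic \<open>v\<^sup>2 - v = D u (u+v) + 2u\<close>. The affine map
  \<open>(u, v) \<mapsto> (u+v, Du + (D+1)v + 1)\<close> preserves the conic, and along its orbit through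
  \<open>(0, 0)\<close> the coordinate \<open>v\<close> obeys \<open>v\<^sub>n\<^sub>+\<^sub>2 = (D+2) v\<^sub>n\<^sub>+\<^sub>1 - v\<^sub>n\<close>. Since \<open>D + 2 = (\<beta>+3)\<^sup>2 - 7\<close>
  has absolute value at least 2, \<open>|v\<^sub>n|\<close> grows strictly, and \<open>r - q = \<beta>v\<close> makes the
  quadruples distinct. Each coordinate is \<open>1\<close> modulo \<open>\<beta>\<close>, hence nonzero when \<open>|\<beta>| \<ge> 2\<close>;
  for \<open>\<beta> = \<plusminus>1\<close> the coordinates \<open>p, s\<close> are odd, and \<open>3\<close> divides \<open>D + 2\<close>, hence \<open>v\<^sub>n\<close> for even
  \<open>n\<close>, which makes \<open>q, r \<equiv> 1 (mod 3)\<close>.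
\<close>

lemma one_plus_neq_0_if_dvd:
  fixes d k :: int
  assumes "d dvd k" and "\<bar>d\<bar> \<noteq> 1"
  shows "1 + k \<noteq> 0"
proof
  assume "1 + k = 0"
  then have "k = - 1" by simp
  then have "d dvd 1" using assms(1) by simp
  then show False using assms(2) by simp
qed

lemma abs_strict_mono_if_second_order_rec:
  fixes w :: "nat \<Rightarrow> int" and c :: int
  assumes rec: "\<And>n. w (Suc (Suc n)) = c * w (Suc n) - w n"
    and c: "\<bar>c\<bar> \<ge> 2" and start: "\<bar>w 0\<bar> < \<bar>w 1\<bar>"
  shows "strict_mono (\<lambda>n. \<bar>w n\<bar>)"
  unfolding strict_mono_Suc_iff
proof
  fix n show "\<bar>w n\<bar> < \<bar>w (Suc n)\<bar>"
  proof (induction n)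
    case 0
    then show ?case using start by simp
  next
    case (Suc n)
    have "2 * \<bar>w (Suc n)\<bar> \<le> \<bar>c * w (Suc n)\<bar>"
      using c by (simp add: abs_mult mult_right_mono)
    then show ?case using Suc.IH rec[of n] by linarith
  qed
qed

lemma dvd_even_index_if_second_order_rec:
  fixes w :: "nat \<Rightarrow> int" and c d :: int
  assumes rec: "\<And>n. w (Suc (Suc n)) = c * w (Suc n) - w n"
    and "d dvd c" and "d dvd w 0"
  shows "d dvd w (2 * n)"
proof (induction n)
  case 0
  then show ?case using assms(3) by simp
next
  case (Suc n)
  have "w (2 * Suc n) = c * w (Suc (2 * n)) - w (2 * n)" using rec[of "2 * n"] by simp
  then show ?case using Suc.IH assms(2) by simp
qed

definition on_conic :: "int \<Rightarrow> int \<times> int \<Rightarrow> bool" where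
  "on_conic \<beta> = (\<lambda>(u, v). v^2 - v = \<beta>*(\<beta>+6)*u*(u+v) + 2*u)"

definition conic_step :: "int \<Rightarrow> int \<times> int \<Rightarrow> int \<times> int" where
  "conic_step \<beta> = (\<lambda>(u, v). (u + v, \<beta>*(\<beta>+6)*u + (\<beta>*(\<beta>+6) + 1)*v + 1))"

primrec conic_orbit :: "int \<Rightarrow> nat \<Rightarrow> int \<times> int" where
  "conic_orbit \<beta> 0 = (0, 0)"
| "conic_orbit \<beta> (Suc n) = conic_step \<beta> (conic_orbit \<beta> n)"

definition conic_quadruple :: "int \<Rightarrow> int \<times> int \<Rightarrow> int \<times> int \<times> int \<times> int" where
  "conic_quadruple \<beta> = (\<lambda>(u, v).
     (1 + \<beta>*(\<beta>+3)*u, 1 + \<beta>*(v+3*u), 1 + \<beta>*(2*v+3*u), 1 + \<beta>*(\<beta>+3)*(u+v)))"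

lemma on_conic_step:
  assumes "on_conic \<beta> x"
  shows "on_conic \<beta> (conic_step \<beta> x)"
proof (cases x)
  case (Pair u v)
  show ?thesis using assms by (simp add: Pair on_conic_def conic_step_def) algebra
qed

lemma on_conic_orbit: "on_conic \<beta> (conic_orbit \<beta> n)"
  by (induction n) (simp add: on_conic_def, simp add: on_conic_step)

lemma snd_conic_orbit_rec:
  "snd (conic_orbit \<beta> (Suc (Suc n))) =
     (\<beta>^2 + 6*\<beta> + 2) * snd (conic_orbit \<beta> (Suc n)) - snd (conic_orbit \<beta> n)"
proof (cases "conic_orbit \<beta> n")
  case (Pair u v)
  show ?thesis by (simp add: Pair conic_step_def) algebra
qed

lemma abs_conic_coeff_ge_2:
  fixes \<beta> :: int
  shows "\<bar>\<beta>^2 + 6*\<beta> + 2\<bar> \<ge> 2"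
proof -
  have eq: "\<beta>^2 + 6*\<beta> + 2 = (\<beta> + 3)^2 - 7" by algebra
  show ?thesis
  proof (cases "\<bar>\<beta> + 3\<bar> \<le> 2")
    case True
    then have "(\<beta> + 3)^2 \<le> 2^2" using abs_le_square_iff[of "\<beta> + 3" 2] by simp
    then show ?thesis unfolding eq by simp
  next
    case False
    then have "3^2 \<le> (\<beta> + 3)^2" using abs_le_square_iff[of 3 "\<beta> + 3"] by simp
    then show ?thesis unfolding eq by simp
  qed
qed

lemma strict_mono_abs_snd_conic_orbit: "strict_mono (\<lambda>n. \<bar>snd (conic_orbit \<beta> n)\<bar>)"
  by (rule abs_strict_mono_if_second_order_rec[where w = "\<lambda>n. snd (conic_orbit \<beta> n)",
        OF snd_conic_orbit_rec abs_conic_coeff_ge_2])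
    (simp add: conic_step_def)

lemma three_dvd_snd_conic_orbit_even:
  assumes "\<bar>\<beta>\<bar> = 1"
  shows "3 dvd snd (conic_orbit \<beta> (2 * n))"
proof (rule dvd_even_index_if_second_order_rec[where w = "\<lambda>n. snd (conic_orbit \<beta> n)",
      OF snd_conic_orbit_rec])
  have "\<beta> = 1 \<or> \<beta> = -1" using assms by arith
  then show "3 dvd \<beta>^2 + 6*\<beta> + 2" by auto
qed simp

lemma conic_quadruple_polynomial_identities:
  fixes \<beta> u v :: int
  assumes "on_conic \<beta> (u, v)" and "conic_quadruple \<beta> (u, v) = (p, q, r, s)"
  shows "(p^2 + s^2)*q*r + \<beta>*(p+s)*(q^2 + r^2 + p*s) + \<beta>^2*q*r = (\<beta>^2+6*\<beta>+2)*(p*q*r*s)"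
    and "p*r^2*(q+r+s) + s*q^2*(p+q+r) + p*s*(p*r + p*s + q*s) + \<beta>*q*r*(q+r)
           = (2*\<beta>+9)*(p*q*r*s)"
    and "(p*s + q^2 + r^2) * (p*r^2 + p*s^2 + q^2*s + \<beta>*q*r) * (p*r^2 + p^2*s + q^2*s + \<beta>*q*r)
           = 3*(\<beta>+3)^2*(p^2*q^2*r^2*s^2)"
  using assms unfolding on_conic_def conic_quadruple_def by (simp_all, algebra+)

lemma J_values_conic_quadruple:
  assumes "on_conic \<beta> (u, v)" and "conic_quadruple \<beta> (u, v) = (p, q, r, s)"
    and "p * q * r * s \<noteq> 0"
  shows "J1 \<beta> p q r s = of_int (\<beta>^2 + 6*\<beta> + 2)"
    and "J2 \<beta> p q r s = of_int (2*\<beta> + 9)"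
    and "J3 \<beta> p q r s = 3 * of_int ((\<beta> + 3)^2)"
  using assms(3) conic_quadruple_polynomial_identities[OF assms(1,2)]
  unfolding J1_def J2_def J3_def by simp_all

lemma conic_quadruple_nonzero:
  fixes \<beta> u v :: int
  assumes "\<beta> \<noteq> 0" and "\<bar>\<beta>\<bar> = 1 \<Longrightarrow> 3 dvd v"
    and "conic_quadruple \<beta> (u, v) = (p, q, r, s)"
  shows "p * q * r * s \<noteq> 0"
proof -
  have coords: "p = 1 + \<beta>*(\<beta>+3)*u" "q = 1 + \<beta>*(v+3*u)" "r = 1 + \<beta>*(2*v+3*u)"
    "s = 1 + \<beta>*(\<beta>+3)*(u+v)"
    using assms(3) unfolding conic_quadruple_def by auto
  show ?thesis
  proof (cases "\<bar>\<beta>\<bar> = 1")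
    case True
    then have "\<beta> = 1 \<or> \<beta> = -1" by arith
    then have two: "2 dvd \<beta>*(\<beta>+3)" by auto
    have three: "3 dvd v + 3*u" "3 dvd 2*v + 3*u" using assms(2)[OF True] by simp_all
    have "p \<noteq> 0" "s \<noteq> 0" unfolding coords
      by (rule one_plus_neq_0_if_dvd[of 2], simp_all add: two dvd_mult2)+
    moreover have "q \<noteq> 0" "r \<noteq> 0" unfolding coords
      by (rule one_plus_neq_0_if_dvd[of 3], simp_all add: three dvd_mult)+
    ultimately show ?thesis by simp
  next
    case False
    have "p \<noteq> 0" "q \<noteq> 0" "r \<noteq> 0" "s \<noteq> 0" unfolding coords
      by (rule one_plus_neq_0_if_dvd[of \<beta>], simp_all add: False mult.assoc)+
    then show ?thesis by simp
  qed
qed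

lemma conic_quadruple_eq_imp_snd_eq:
  assumes "\<beta> \<noteq> 0" and "conic_quadruple \<beta> x = conic_quadruple \<beta> y"
  shows "snd x = snd y"
proof -
  obtain u v u' v' where xy: "x = (u, v)" "y = (u', v')" by fastforce
  have "v + 3*u = v' + 3*u'" and "2*v + 3*u = 2*v' + 3*u'"
    using assms unfolding xy conic_quadruple_def by auto
  then show ?thesis using xy by simp
qed

theorem corollary3p8:
  fixes \<beta> :: int and l1 l2 l3 :: rat
  assumes "\<beta> \<noteq> 0"
    and "(l1, l2, l3) \<noteq> (0, 0, 0)"
  shows "infinite {(p::int, q::int, r::int, s::int).
           p * q * r * s \<noteq> 0 \<and>
           l1 * J1 \<beta> p q r s + l2 * J2 \<beta> p q r s + l3 * J3 \<beta> p q r s =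
           l1 * of_int (\<beta>^2 + 6*\<beta> + 2) + l2 * of_int (2*\<beta> + 9)
             + 3 * l3 * of_int ((\<beta> + 3)^2)}" (is "infinite ?S")
proof -
  define f where "f n = conic_quadruple \<beta> (conic_orbit \<beta> (2 * n))" for n
  have inj: "inj f"
  proof (rule injI)
    fix m n assume "f m = f n"
    then have "snd (conic_orbit \<beta> (2 * m)) = snd (conic_orbit \<beta> (2 * n))"
      unfolding f_def by (rule conic_quadruple_eq_imp_snd_eq[OF assms(1)])
    then show "m = n"
      using strict_mono_eq[OF strict_mono_abs_snd_conic_orbit, of \<beta> "2 * m" "2 * n"] by simp
  qed
  have "range f \<subseteq> ?S"
  proof (rule image_subsetI)
    fix n
    obtain u v where uv: "conic_orbit \<beta> (2 * n) = (u, v)" by fastforce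
    obtain p q r s where pqrs: "conic_quadruple \<beta> (u, v) = (p, q, r, s)"
      by (cases "conic_quadruple \<beta> (u, v)") auto
    have conic: "on_conic \<beta> (u, v)" using on_conic_orbit[of \<beta> "2 * n"] uv by simp
    have "3 dvd v" if "\<bar>\<beta>\<bar> = 1" using three_dvd_snd_conic_orbit_even[OF that, of n] uv by simp
    then have nz: "p * q * r * s \<noteq> 0" by (rule conic_quadruple_nonzero[OF assms(1) _ pqrs])
    show "f n \<in> ?S" using J_values_conic_quadruple[OF conic pqrs nz] nz uv pqrs f_def by simp
  qed
  then show ?thesis using range_inj_infinite[OF inj] by (rule infinite_super)
qed

end
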